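(* In the setting of the context, regard the error exponent $K=K(a)$ as a function of the correlation coefficient $a\in[0,1]$ with $\Pi_0$ and $\sigma^2$ fixed. If $\Gamma=\Pi_0/\sigma^2>1$, then $K(a)$ is monotonically decreasing in $a$ on $[0,1]$; in particular its maximum is attained at $a=0$, where $K(0)=D(\mathcal N(0,1)\|\mathcal N(0,1+\Gamma))$.
   Context: Model: fix $a\in[0,1]$, $\Pi_0>0$, $\sigma^2>0$. The signal is a stationary Gaussian first-order autoregressive sequence $s_{i+1}=a s_i+u_i$, $i\ge1$, with $s_1\sim\mathcal N(0,\Pi_0)$ and $u_i$ i.i.d. $\mathcal N(0,Q)$, $Q=\Pi_0(1-a^2)$, independent of $s_1$. Observations follow $H_0: y_i=w_i$ or $H_1: y_i=s_i+w_i$, $w_i$ i.i.d. $\mathcal N(0,\sigma^2)$ independent of the signal; $\Gamma=\Pi_0/\sigma^2$ is the SNR. The error exponent $K$ is $-\lim_{n\to\infty}\frac1n\log P_M(n)$, where $P_M(n)$ is the miss probability of the level-$\alpha$ Neyman–Pearson detector based on $y_1,\dots,y_n$ (independent of $\alpha\in(0,1)$); explicitly $K=\frac{1}{2\pi}\int_0^{2\pi} D(\mathcal N(0,\sigma^2)\|\mathcal N(0,S_y(\omega)))\,d\omega$ with $S_y(\omega)=\sigma^2+\frac{\Pi_0(1-a^2)}{1-2a\cos\omega+a^2}$, $D$ the Kullback–Leibler divergence. *)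

theory Defs
  imports "HOL-Probability.Probability"
begin

definition gauss :: "real \<Rightarrow> real measure" where
  "gauss v = density lborel (\<lambda>x. ennreal (normal_density 0 (sqrt v) x))"

text \<open>Kullback-Leibler divergence D(P||Q) in nats. Note that the library's
  KL_divergence b M N is the divergence of N with respect to M.\<close>
definition KLdiv :: "real measure \<Rightarrow> real measure \<Rightarrow> real" where
  "KLdiv P Q = KL_divergence (exp 1) Q P"

definition spec_y :: "real \<Rightarrow> real \<Rightarrow> real \<Rightarrow> real \<Rightarrow> real" where
  "spec_y Pi0 sigma2 a \<omega> = sigma2 + Pi0 * (1 - a\<^sup>2) / (1 - 2 * a * cos \<omega> + a\<^sup>2)"

definition err_exp :: "real \<Rightarrow> real \<Rightarrow> real \<Rightarrow> real" where
  "err_exp Pi0 sigma2 a =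
     1 / (2 * pi) * integral {0..2*pi} (\<lambda>\<omega>. KLdiv (gauss sigma2) (gauss (spec_y Pi0 sigma2 a \<omega>)))"

end

theory Submission
  imports Defs "HOL-Complex_Analysis.Complex_Analysis"
begin

(*
  Write S_y(w) / sigma^2 = N(w) / D(w) with D(w) = 1 - 2 a cos w + a^2 and
  N(w) = D(w) + Gamma (1 - a^2). Since D(N(0,s) || N(0,t)) = (s/t - 1 + ln (t/s)) / 2,
  the integrand of K is (ln N - ln D - Gamma (1 - a^2) / N) / 2. For |r| < 1 the mean value
  property on the unit circle, applied to Ln (1 - r z) and (1 + r z) / (1 - r z), integrates
  ln (1 - 2 r cos w + r^2) and the Poisson kernel, and every A - 2 b cos w with 2 |b| < A is a
  positive multiple of such a polynomial. This gives K in closed form.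

  With t = sqrt (1 - a^2) and Q = sqrt (4 Gamma + (Gamma - 1)^2 t^2) one has
  Q^2 - (Gamma - 1)^2 t^2 = 4 Gamma, and in the variable zeta = (Q + (Gamma - 1) t)^2, which
  decreases from 4 Gamma^2 to 4 Gamma as a runs over [0, 1], the closed form becomes
  2 K = ln ((zeta - 4) / (4 (Gamma - 1))) - Gamma / (Gamma - 1) * (zeta - 4 Gamma) / (zeta + 4 Gamma).
  For Gamma > 1 its derivative in zeta is nonnegative on [4 Gamma, 4 Gamma^2].
*)

lemma KLdiv_gauss:
  fixes s t :: real
  assumes "0 < s" and "0 < t"
  shows "KLdiv (gauss s) (gauss t) = (s / t - 1 + ln (t / s)) / 2"
proof -
  let ?f = "normal_density 0 (sqrt s)" and ?g = "normal_density 0 (sqrt t)"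
  have ln_density: "ln (normal_density 0 (sqrt v) x) = - x\<^sup>2 / (2 * v) - (ln 2 + ln pi + ln v) / 2"
    if "0 < v" for v x
    using that by (simp add: normal_density_def ln_div ln_sqrt ln_mult)
  have log_ratio: "log (exp 1) (?f x / ?g x) = (ln t - ln s) / 2 + (1 / (2 * t) - 1 / (2 * s)) * x\<^sup>2" for x
  proof -
    have "log (exp 1) (?f x / ?g x) = ln (?f x) - ln (?g x)"
      using assms by (simp add: log_def ln_divide_pos normal_density_pos)
    thus ?thesis
      using assms by (simp add: ln_density field_simps)
  qed
  have "KLdiv (gauss s) (gauss t) = (\<integral>x. ?f x * log (exp 1) (?f x / ?g x) \<partial>lborel)"
    unfolding KLdiv_def gauss_def using assms
    by (intro lborel.KL_density_density) (auto simp: normal_density_pos less_imp_neq[symmetric] intro!: AE_I2)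
  also have "\<dots> = (\<integral>x. (ln t - ln s) / 2 * ?f x + (1 / (2 * t) - 1 / (2 * s)) * (?f x * x\<^sup>2) \<partial>lborel)"
    by (simp add: log_ratio algebra_simps)
  also have "\<dots> = (ln t - ln s) / 2 + (1 / (2 * t) - 1 / (2 * s)) * s"
  proof -
    have "integrable lborel (\<lambda>x. ?f x * x\<^sup>2)" and "(\<integral>x. ?f x * x\<^sup>2 \<partial>lborel) = s"
      using integrable_normal_moment[of "sqrt s" 0 2] integral_normal_moment_even[of "sqrt s" 0 1] assms(1)
      by (simp_all add: fact_numeral)
    thus ?thesis
      using assms(1) integrable_normal_density[of "sqrt s" 0] integral_normal_density[of "sqrt s" 0]
      by simp
  qed
  also have "\<dots> = (s / t - 1 + ln (t / s)) / 2"
    using assms by (simp add: ln_div field_simps)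
  finally show ?thesis .
qed

lemma KLdiv_gauss_scale:
  fixes c s t :: real
  assumes "0 < c" and "0 < s" and "0 < t"
  shows "KLdiv (gauss (c * s)) (gauss (c * t)) = KLdiv (gauss s) (gauss t)"
  using assms by (simp add: KLdiv_gauss)

lemma has_integral_holomorphic_cis:
  fixes f :: "complex \<Rightarrow> complex"
  assumes "f holomorphic_on cball 0 1"
  shows "((\<lambda>t. f (cis t)) has_integral (2 * pi * f 0)) {0..2*pi}"
proof -
  have "((\<lambda>z. f z / (z - 0)) has_contour_integral (2 * of_real pi * \<i> * f 0)) (circlepath 0 1)"
    by (rule Cauchy_integral_circlepath)
       (use assms in \<open>auto intro: holomorphic_on_imp_continuous_on holomorphic_on_subset[OF _ ball_subset_cball]\<close>)
  hence "((\<lambda>t. f (cis t) / cis t * \<i> * cis t) has_integral (2 * of_real pi * \<i> * f 0)) {0..2*pi}"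
    unfolding circlepath_def by (subst (asm) has_contour_integral_part_circlepath_iff) auto
  hence "((\<lambda>t. \<i> * f (cis t)) has_integral (2 * of_real pi * \<i> * f 0)) {0..2*pi}"
    by (rule has_integral_eq[rotated]) (auto simp: cis_neq_zero)
  hence "((\<lambda>t. \<i> * f (cis t)) has_integral (\<i> * (2 * pi * f 0))) {0..2*pi}"
    by (simp add: ac_simps)
  thus ?thesis
    by (subst (asm) has_integral_mult_right_iff) auto
qed

lemma cmod_one_minus_cis_squared:
  "(cmod (1 - complex_of_real r * cis t))\<^sup>2 = 1 - 2 * r * cos t + r\<^sup>2"
  unfolding cmod_power2 using sin_cos_squared_add[of t] by (simp add: power2_eq_square) algebra

lemma Re_one_minus_pos:
  fixes r :: real and z :: complex
  assumes "\<bar>r\<bar> < 1" and "z \<in> cball 0 1"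
  shows "0 < Re (1 - complex_of_real r * z)"
proof -
  have "Re (complex_of_real r * z) \<le> cmod (complex_of_real r * z)"
    by (rule complex_Re_le_cmod)
  also have "\<dots> \<le> \<bar>r\<bar>"
    using assms(2) by (simp add: norm_mult mult_left_le)
  finally show ?thesis using assms(1) by simp
qed

lemma has_integral_ln_poisson:
  fixes r :: real
  assumes "\<bar>r\<bar> < 1"
  shows "((\<lambda>t. ln (1 - 2 * r * cos t + r\<^sup>2)) has_integral 0) {0..2*pi}"
proof -
  have "(\<lambda>z. 2 * Ln (1 - complex_of_real r * z)) holomorphic_on cball 0 1"
    using Re_one_minus_pos[OF assms] by (intro holomorphic_intros) (fastforce simp: complex_nonpos_Reals_iff)
  from has_integral_Re[OF has_integral_holomorphic_cis[OF this]]
  have "((\<lambda>t. Re (2 * Ln (1 - complex_of_real r * cis t))) has_integral 0) {0..2*pi}"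
    by simp
  moreover have "Re (2 * Ln (1 - complex_of_real r * cis t)) = ln (1 - 2 * r * cos t + r\<^sup>2)" for t
  proof -
    have "0 < Re (1 - complex_of_real r * cis t)"
      by (rule Re_one_minus_pos[OF assms]) simp
    hence "0 < cmod (1 - complex_of_real r * cis t)"
      using complex_Re_le_cmod less_le_trans by blast
    hence "Re (2 * Ln (1 - complex_of_real r * cis t)) = ln ((cmod (1 - complex_of_real r * cis t))\<^sup>2)"
      by (simp add: Re_Ln ln_realpow)
    thus ?thesis
      by (simp only: cmod_one_minus_cis_squared)
  qed
  ultimately show ?thesis by simp
qed

lemma has_integral_poisson_kernel:
  fixes r :: real
  assumes "\<bar>r\<bar> < 1"
  shows "((\<lambda>t. (1 - r\<^sup>2) / (1 - 2 * r * cos t + r\<^sup>2)) has_integral 2 * pi) {0..2*pi}"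
proof -
  have "(\<lambda>z. (1 + complex_of_real r * z) / (1 - complex_of_real r * z)) holomorphic_on cball 0 1"
    using Re_one_minus_pos[OF assms] by (intro holomorphic_intros) fastforce
  from has_integral_Re[OF has_integral_holomorphic_cis[OF this]]
  have "((\<lambda>t. Re ((1 + complex_of_real r * cis t) / (1 - complex_of_real r * cis t))) has_integral 2 * pi) {0..2*pi}"
    by simp
  moreover have "Re ((1 + complex_of_real r * cis t) / (1 - complex_of_real r * cis t))
                   = (1 - r\<^sup>2) / (1 - 2 * r * cos t + r\<^sup>2)" for t
  proof -
    have "Re ((1 + complex_of_real r * cis t) * cnj (1 - complex_of_real r * cis t)) = 1 - r\<^sup>2"
      using sin_cos_squared_add[of t] by (simp add: power2_eq_square) algebra
    thus ?thesis
      by (simp add: Re_divide' cmod_one_minus_cis_squared)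
  qed
  ultimately show ?thesis by simp
qed

lemma poisson_denominator_pos:
  fixes r t :: real
  assumes "\<bar>r\<bar> < 1"
  shows "0 < 1 - 2 * r * cos t + r\<^sup>2"
proof -
  have "r * cos t \<le> \<bar>r\<bar>"
    using abs_cos_le_one[of t] by (metis abs_ge_self abs_mult mult_left_le order_trans abs_ge_zero)
  hence "(1 - \<bar>r\<bar>)\<^sup>2 \<le> 1 - 2 * r * cos t + r\<^sup>2"
    by (simp add: power2_eq_square algebra_simps)
  moreover have "0 < (1 - \<bar>r\<bar>)\<^sup>2" using assms by simp
  ultimately show ?thesis by linarith
qed

lemma cos_polynomial_factorization:
  fixes A b :: real
  assumes "2 * \<bar>b\<bar> < A"
  obtains c r where "0 < c" and "\<bar>r\<bar> < 1"
    and "2 * c = A + sqrt (A\<^sup>2 - 4 * b\<^sup>2)" and "c * (1 - r\<^sup>2) = sqrt (A\<^sup>2 - 4 * b\<^sup>2)"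
    and "\<And>t. A - 2 * b * cos t = c * (1 - 2 * r * cos t + r\<^sup>2)"
proof -
  define R where "R = sqrt (A\<^sup>2 - 4 * b\<^sup>2)"
  define c where "c = (A + R) / 2"
  define r where "r = b / c"
  have "(2 * \<bar>b\<bar>)\<^sup>2 < A\<^sup>2"
    using assms by (intro power_strict_mono) auto
  hence RR: "R\<^sup>2 = A\<^sup>2 - 4 * b\<^sup>2" and "0 < R"
    unfolding R_def by (auto simp: power_mult_distrib)
  have c2: "2 * c = A + R"
    by (simp add: c_def)
  have "2 * \<bar>b\<bar> < 2 * c"
    using assms \<open>0 < R\<close> c2 by linarith
  hence c_pos: "0 < c" and r: "\<bar>r\<bar> < 1" and cr: "c * r = b"
    by (auto simp: r_def abs_divide)
  have "c * (1 - r\<^sup>2) * (4 * c) = (2 * c)\<^sup>2 - 4 * (c * r)\<^sup>2"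
    by (simp add: power2_eq_square algebra_simps)
  also have "\<dots> = (A + R)\<^sup>2 - 4 * b\<^sup>2"
    by (simp only: cr c2)
  also have "\<dots> = R * (2 * (A + R))"
    using RR by (simp add: power2_eq_square algebra_simps)
  also have "\<dots> = R * (4 * c)"
    by (simp flip: c2)
  finally have minus: "c * (1 - r\<^sup>2) = R"
    using c_pos by simp
  have "c * (1 + r\<^sup>2) * (4 * c) = (2 * c)\<^sup>2 + 4 * (c * r)\<^sup>2"
    by (simp add: power2_eq_square algebra_simps)
  also have "\<dots> = (A + R)\<^sup>2 + 4 * b\<^sup>2"
    by (simp only: cr c2)
  also have "\<dots> = A * (2 * (A + R))"
    using RR by (simp add: power2_eq_square algebra_simps)
  also have "\<dots> = A * (4 * c)"
    by (simp flip: c2)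
  finally have plus: "c * (1 + r\<^sup>2) = A"
    using c_pos by simp
  have factor: "A - 2 * b * cos t = c * (1 - 2 * r * cos t + r\<^sup>2)" for t
    by (simp flip: plus cr add: algebra_simps)
  show thesis
    by (rule that[OF c_pos r c2[unfolded R_def] minus[unfolded R_def] factor])
qed
lemma has_integral_ln_cos:
  fixes A b :: real
  assumes "2 * \<bar>b\<bar> < A"
  shows "((\<lambda>t. ln (A - 2 * b * cos t)) has_integral 2 * pi * ln ((A + sqrt (A\<^sup>2 - 4 * b\<^sup>2)) / 2))
           {0..2*pi}"
proof -
  obtain c r where c: "0 < c" "2 * c = A + sqrt (A\<^sup>2 - 4 * b\<^sup>2)" and r: "\<bar>r\<bar> < 1"
    and factor: "\<And>t. A - 2 * b * cos t = c * (1 - 2 * r * cos t + r\<^sup>2)"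
    using cos_polynomial_factorization[OF assms] by metis
  have "((\<lambda>t. ln c + ln (1 - 2 * r * cos t + r\<^sup>2)) has_integral 2 * pi * ln c + 0) {0..2*pi}"
    using has_integral_const_real[of "ln c" 0 "2 * pi"]
    by (intro has_integral_add has_integral_ln_poisson r) simp
  moreover have "ln c + ln (1 - 2 * r * cos t + r\<^sup>2) = ln (A - 2 * b * cos t)" for t
    unfolding factor by (rule ln_mult_pos[OF c(1) poisson_denominator_pos[OF r], symmetric])
  ultimately show ?thesis
    by (simp flip: c(2))
qed

lemma has_integral_inverse_cos:
  fixes A b :: real
  assumes "2 * \<bar>b\<bar> < A"
  shows "((\<lambda>t. 1 / (A - 2 * b * cos t)) has_integral 2 * pi / sqrt (A\<^sup>2 - 4 * b\<^sup>2)) {0..2*pi}"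
proof -
  obtain c r where "0 < c" and r: "\<bar>r\<bar> < 1" and R: "c * (1 - r\<^sup>2) = sqrt (A\<^sup>2 - 4 * b\<^sup>2)"
    and factor: "\<And>t. A - 2 * b * cos t = c * (1 - 2 * r * cos t + r\<^sup>2)"
    using cos_polynomial_factorization[OF assms] by metis
  have "0 < 1 - r\<^sup>2"
    using r by (simp add: abs_square_less_1)
  hence "1 / (c * (1 - r\<^sup>2)) * ((1 - r\<^sup>2) / (1 - 2 * r * cos t + r\<^sup>2)) = 1 / (A - 2 * b * cos t)" for t
    by (simp add: factor)
  moreover have "((\<lambda>t. 1 / (c * (1 - r\<^sup>2)) * ((1 - r\<^sup>2) / (1 - 2 * r * cos t + r\<^sup>2)))
                   has_integral 1 / (c * (1 - r\<^sup>2)) * (2 * pi)) {0..2*pi}"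
    by (intro has_integral_mult_right has_integral_poisson_kernel r)
  ultimately show ?thesis
    by (simp add: R)
qed

lemma KLdiv_gauss_spec_y:
  fixes Pi0 sigma2 a \<omega> :: real
  assumes "0 \<le> Pi0" and "0 < sigma2" and "\<bar>a\<bar> < 1"
  defines "g \<equiv> Pi0 / sigma2"
  defines "N \<equiv> 1 + a\<^sup>2 + g * (1 - a\<^sup>2) - 2 * a * cos \<omega>"
  shows "KLdiv (gauss sigma2) (gauss (spec_y Pi0 sigma2 a \<omega>))
           = (ln N - ln (1 - 2 * a * cos \<omega> + a\<^sup>2) - g * (1 - a\<^sup>2) / N) / 2"
proof -
  define D where "D = 1 - 2 * a * cos \<omega> + a\<^sup>2"
  have D_pos: "0 < D"
    unfolding D_def using assms(3) by (rule poisson_denominator_pos)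
  have "0 \<le> g * (1 - a\<^sup>2)"
    using assms(1,2,3) by (simp add: g_def abs_square_le_1)
  hence N_eq: "N = D + g * (1 - a\<^sup>2)" and N_pos: "0 < N"
    using D_pos by (auto simp: N_def D_def)
  have "spec_y Pi0 sigma2 a \<omega> = sigma2 + Pi0 * (1 - a\<^sup>2) / D"
    by (simp add: spec_y_def D_def)
  also have "\<dots> = sigma2 * (N / D)"
    using assms(2) D_pos by (simp add: N_eq g_def field_simps)
  finally have spec: "spec_y Pi0 sigma2 a \<omega> = sigma2 * (N / D)" .
  have "sigma2 / spec_y Pi0 sigma2 a \<omega> - 1 = (N - g * (1 - a\<^sup>2)) / N - 1"
    using assms(2) D_pos N_pos by (simp add: spec N_eq)
  also have "\<dots> = - (g * (1 - a\<^sup>2) / N)"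
    using N_pos by (simp add: field_simps)
  finally have "sigma2 / spec_y Pi0 sigma2 a \<omega> - 1 = - (g * (1 - a\<^sup>2) / N)" .
  moreover have "ln (spec_y Pi0 sigma2 a \<omega> / sigma2) = ln N - ln D"
    using assms(2) D_pos N_pos by (simp add: spec ln_div)
  moreover have "0 < spec_y Pi0 sigma2 a \<omega>"
    using assms(2) D_pos N_pos by (simp add: spec)
  ultimately show ?thesis
    using assms(2) by (simp add: KLdiv_gauss D_def)
qed

lemma err_exp_closed_form:
  fixes Pi0 sigma2 a :: real
  assumes "0 \<le> Pi0" and "0 < sigma2" and "\<bar>a\<bar> < 1"
  defines "g \<equiv> Pi0 / sigma2"
  defines "A \<equiv> 1 + a\<^sup>2 + g * (1 - a\<^sup>2)"
  defines "R \<equiv> sqrt (A\<^sup>2 - 4 * a\<^sup>2)"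
  shows "err_exp Pi0 sigma2 a = (ln ((A + R) / 2) - g * (1 - a\<^sup>2) / R) / 2"
proof -
  have "0 < (1 - \<bar>a\<bar>)\<^sup>2" and "0 \<le> g * (1 - a\<^sup>2)"
    using assms(1,2,3) by (auto simp: g_def abs_square_le_1)
  hence A: "2 * \<bar>a\<bar> < A"
    by (simp add: A_def power2_eq_square algebra_simps)
  have integrand: "KLdiv (gauss sigma2) (gauss (spec_y Pi0 sigma2 a \<omega>))
      = (ln (A - 2 * a * cos \<omega>) - ln (1 - 2 * a * cos \<omega> + a\<^sup>2)
           - g * (1 - a\<^sup>2) * (1 / (A - 2 * a * cos \<omega>))) / 2" for \<omega>
    unfolding A_def g_def using KLdiv_gauss_spec_y[OF assms(1,2,3)] by simp
  have "((\<lambda>\<omega>. (ln (A - 2 * a * cos \<omega>) - ln (1 - 2 * a * cos \<omega> + a\<^sup>2)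
                   - g * (1 - a\<^sup>2) * (1 / (A - 2 * a * cos \<omega>))) / 2)
         has_integral (2 * pi * ln ((A + R) / 2) - 0 - g * (1 - a\<^sup>2) * (2 * pi / R)) / 2) {0..2*pi}"
    unfolding R_def
    by (intro has_integral_divide has_integral_diff has_integral_mult_right has_integral_ln_cos
          has_integral_ln_poisson has_integral_inverse_cos A assms(3))
  moreover have "(2 * pi * ln ((A + R) / 2) - 0 - g * (1 - a\<^sup>2) * (2 * pi / R)) / 2
                   = 2 * pi * ((ln ((A + R) / 2) - g * (1 - a\<^sup>2) / R) / 2)"
    by argo
  ultimately have "((\<lambda>\<omega>. KLdiv (gauss sigma2) (gauss (spec_y Pi0 sigma2 a \<omega>)))
                      has_integral 2 * pi * ((ln ((A + R) / 2) - g * (1 - a\<^sup>2) / R) / 2)) {0..2*pi}"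
    by (simp only: integrand)
  thus ?thesis
    unfolding err_exp_def by (simp add: integral_unique)
qed

definition zeta :: "real \<Rightarrow> real \<Rightarrow> real" where
  "zeta g a = (sqrt (4 * g + (g - 1)\<^sup>2 * (1 - a\<^sup>2)) + (g - 1) * sqrt (1 - a\<^sup>2))\<^sup>2"

definition K_zeta :: "real \<Rightarrow> real \<Rightarrow> real" where
  "K_zeta g z = ln ((z - 4) / (4 * (g - 1))) - g / (g - 1) * ((z - 4 * g) / (z + 4 * g))"

lemma K_zeta_square:
  fixes g t Q :: real
  assumes "1 < g" and "0 < t" and "0 < Q" and QQ: "Q\<^sup>2 = 4 * g + (g - 1)\<^sup>2 * t\<^sup>2"
  shows "K_zeta g ((Q + (g - 1) * t)\<^sup>2) = ln ((2 + (g - 1) * t\<^sup>2 + t * Q) / 2) - g * t / Q"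
proof -
  define h where "h = g - 1"
  define u where "u = Q + h * t"
  have h: "0 < h" and g: "g = 1 + h"
    using assms(1) by (simp_all add: h_def)
  have u: "0 < u"
    using assms(2,3) h by (simp add: u_def add_pos_nonneg)
  have u_minus_4: "u\<^sup>2 - 4 = 2 * h * (2 + h * t\<^sup>2 + t * Q)"
    unfolding u_def power2_sum QQ by (simp add: g power2_eq_square algebra_simps flip: h_def)
  have u_minus_4g: "u\<^sup>2 - 4 * g = 2 * h * t * u"
    unfolding u_def power2_sum QQ by (simp add: power2_eq_square algebra_simps flip: h_def)
  have "2 * Q * u = 2 * Q\<^sup>2 + 2 * h * t * Q"
    by (simp add: u_def power2_eq_square algebra_simps)
  hence u_plus_4g: "u\<^sup>2 + 4 * g = 2 * Q * u"
    unfolding u_def power2_sum QQ by (simp add: power2_eq_square algebra_simps flip: h_def)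
  show ?thesis
    using h u assms(3)
    by (simp add: K_zeta_def u_minus_4 u_minus_4g u_plus_4g flip: h_def u_def)
      (rule arg_cong[where f = ln], simp)
qed

lemma closed_form_eq_K_zeta:
  fixes g a :: real
  assumes "1 < g" and "\<bar>a\<bar> < 1"
  defines "A \<equiv> 1 + a\<^sup>2 + g * (1 - a\<^sup>2)"
  shows "ln ((A + sqrt (A\<^sup>2 - 4 * a\<^sup>2)) / 2) - g * (1 - a\<^sup>2) / sqrt (A\<^sup>2 - 4 * a\<^sup>2)
           = K_zeta g (zeta g a)"
proof -
  define t where "t = sqrt (1 - a\<^sup>2)"
  define Q where "Q = sqrt (4 * g + (g - 1)\<^sup>2 * t\<^sup>2)"
  have "a\<^sup>2 < 1"
    using assms(2) by (simp add: abs_square_less_1)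
  hence t: "0 < t" and tt: "t\<^sup>2 = 1 - a\<^sup>2"
    by (simp_all add: t_def)
  have Q: "0 < Q" and QQ: "Q\<^sup>2 = 4 * g + (g - 1)\<^sup>2 * t\<^sup>2"
    using assms(1) t by (simp_all add: Q_def add_pos_nonneg)
  have A: "A = 2 + (g - 1) * t\<^sup>2"
    by (simp add: A_def tt algebra_simps)
  have "A\<^sup>2 - 4 * a\<^sup>2 = (2 + (g - 1) * t\<^sup>2)\<^sup>2 - 4 * (1 - t\<^sup>2)"
    by (simp add: A tt)
  also have "\<dots> = (t * Q)\<^sup>2"
    unfolding power_mult_distrib QQ by (simp add: power2_eq_square algebra_simps)
  finally have R: "sqrt (A\<^sup>2 - 4 * a\<^sup>2) = t * Q"
    using t Q by simp
  have "g * (1 - a\<^sup>2) / (t * Q) = g * t / Q"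
    unfolding tt [symmetric] using t by (simp add: power2_eq_square)
  moreover have "zeta g a = (Q + (g - 1) * t)\<^sup>2"
    using t by (simp add: zeta_def Q_def flip: t_def tt)
  ultimately show ?thesis
    unfolding R using K_zeta_square[OF assms(1) t Q QQ] by (simp add: A)
qed

lemma K_zeta_has_real_derivative:
  fixes g z :: real
  assumes "1 < g" and "4 < z"
  shows "(K_zeta g has_real_derivative 1 / (z - 4) - g / (g - 1) * (8 * g / (z + 4 * g)\<^sup>2)) (at z)"
proof -
  have "((\<lambda>z. ln ((z - 4) / (4 * (g - 1)))) has_real_derivative 1 / (z - 4)) (at z)"
    using assms by (auto intro!: derivative_eq_intros)
  moreover have "((\<lambda>z. (z - 4 * g) / (z + 4 * g)) has_real_derivative 8 * g / (z + 4 * g)\<^sup>2) (at z)"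
    using assms by (auto intro!: derivative_eq_intros simp: field_simps power2_eq_square)
  ultimately show ?thesis
    unfolding K_zeta_def [abs_def] by (intro DERIV_diff DERIV_cmult)
qed

lemma K_zeta_derivative_nonneg:
  fixes g z :: real
  assumes "1 < g" and "4 * g \<le> z" and "z \<le> 4 * g\<^sup>2"
  shows "g / (g - 1) * (8 * g / (z + 4 * g)\<^sup>2) \<le> 1 / (z - 4)"
proof -
  define h where "h = g - 1"
  have h: "0 < h" and g: "g = 1 + h"
    using assms(1) by (simp_all add: h_def)
  have z: "4 < z"
    using assms(1,2) by linarith
  have "0 \<le> (h - 1) * z + 4 * g"
  proof (cases "1 \<le> h")
    case True
    thus ?thesis using z g h by simp
  next
    case False
    hence "(h - 1) * (4 * g\<^sup>2) \<le> (h - 1) * z"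
      using assms(3) by (intro mult_left_mono_neg) auto
    moreover have "(h - 1) * (4 * g\<^sup>2) + 4 * g = 4 * g * h\<^sup>2"
      by (simp add: g power2_eq_square algebra_simps)
    moreover have "0 \<le> 4 * g * h\<^sup>2"
      using h g by simp
    ultimately show ?thesis
      by linarith
  qed
  hence "0 \<le> h * (z - 4 * g)\<^sup>2 + 8 * g * ((h - 1) * z + 4 * g)"
    using h g by (simp add: add_nonneg_nonneg)
  also have "h * (z - 4 * g)\<^sup>2 + 8 * g * ((h - 1) * z + 4 * g) = h * (z + 4 * g)\<^sup>2 - 8 * g\<^sup>2 * (z - 4)"
    by (simp add: g power2_eq_square algebra_simps)
  finally have "8 * g\<^sup>2 * (z - 4) \<le> h * (z + 4 * g)\<^sup>2"
    by simp
  moreover have "0 < h * (z + 4 * g)\<^sup>2"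
    using z g h by simp
  moreover have "8 * g\<^sup>2 / Y \<le> 1 / (z - 4)" if "0 < Y" and "8 * g\<^sup>2 * (z - 4) \<le> Y" for Y
    using that z by (simp add: field_simps)
  ultimately have "8 * g\<^sup>2 / (h * (z + 4 * g)\<^sup>2) \<le> 1 / (z - 4)"
    by blast
  thus ?thesis
    by (simp add: h_def power2_eq_square mult.left_commute)
qed

lemma K_zeta_mono_on:
  fixes g :: real
  assumes "1 < g"
  shows "mono_on {4 * g..4 * g\<^sup>2} (K_zeta g)"
proof (rule mono_onI)
  fix x y assume xy: "x \<in> {4 * g..4 * g\<^sup>2}" "y \<in> {4 * g..4 * g\<^sup>2}" "x \<le> y"
  show "K_zeta g x \<le> K_zeta g y"
  proof (rule DERIV_nonneg_imp_nondecreasing[OF xy(3)])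
    fix z assume "x \<le> z" "z \<le> y"
    hence z: "4 * g \<le> z" "z \<le> 4 * g\<^sup>2"
      using xy by auto
    hence "4 < z"
      using assms by linarith
    thus "\<exists>d. (K_zeta g has_real_derivative d) (at z) \<and> 0 \<le> d"
      using K_zeta_has_real_derivative[OF assms] K_zeta_derivative_nonneg[OF assms z] by force
  qed
qed

lemma zeta_antimono_on:
  fixes g :: real
  assumes "1 \<le> g"
  shows "antimono_on {0..1} (zeta g)"
proof (rule monotone_onI)
  fix a b :: real assume ab: "a \<in> {0..1}" "b \<in> {0..1}" "a \<le> b"
  hence "1 - b\<^sup>2 \<le> 1 - a\<^sup>2" and "0 \<le> 1 - b\<^sup>2"
    by (auto intro: power_mono simp: power_le_one)
  hence "sqrt (4 * g + (g - 1)\<^sup>2 * (1 - b\<^sup>2)) \<le> sqrt (4 * g + (g - 1)\<^sup>2 * (1 - a\<^sup>2))"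
    and "(g - 1) * sqrt (1 - b\<^sup>2) \<le> (g - 1) * sqrt (1 - a\<^sup>2)"
    and "0 \<le> sqrt (4 * g + (g - 1)\<^sup>2 * (1 - b\<^sup>2)) + (g - 1) * sqrt (1 - b\<^sup>2)"
    using assms by (auto intro: mult_left_mono)
  thus "zeta g b \<le> zeta g a"
    unfolding zeta_def by (intro power_mono add_mono) auto
qed

lemma zeta_0:
  fixes g :: real
  assumes "0 \<le> g"
  shows "zeta g 0 = 4 * g\<^sup>2"
proof -
  have "4 * g + (g - 1)\<^sup>2 = (g + 1)\<^sup>2"
    by (simp add: power2_eq_square algebra_simps)
  hence "sqrt (4 * g + (g - 1)\<^sup>2) = g + 1"
    using assms by simp
  thus ?thesis
    by (simp add: zeta_def power_mult_distrib)
qed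

lemma zeta_eq_4g:
  fixes g a :: real
  assumes "0 \<le> g" and "a\<^sup>2 = 1"
  shows "zeta g a = 4 * g"
  using assms by (simp add: zeta_def)

lemma K_zeta_4g: "1 < g \<Longrightarrow> K_zeta g (4 * g) = 0"
  by (simp add: K_zeta_def)

lemma zeta_range:
  fixes g a :: real
  assumes "1 \<le> g" and "a \<in> {0..1}"
  shows "zeta g a \<in> {4 * g..4 * g\<^sup>2}"
  using monotone_onD[OF zeta_antimono_on[OF assms(1)], of 0 a]
    monotone_onD[OF zeta_antimono_on[OF assms(1)], of a 1] assms
  by (simp add: zeta_0 zeta_eq_4g)

lemma err_exp_degenerate:
  fixes Pi0 sigma2 a :: real
  assumes "0 < sigma2" and "a\<^sup>2 = 1"
  shows "err_exp Pi0 sigma2 a = 0"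
proof -
  have "spec_y Pi0 sigma2 a \<omega> = sigma2" for \<omega>
    using assms(2) by (simp add: spec_y_def)
  moreover have "KLdiv (gauss sigma2) (gauss sigma2) = 0"
    using assms(1) by (simp add: KLdiv_gauss)
  ultimately show ?thesis
    by (simp add: err_exp_def)
qed

lemma err_exp_eq_K_zeta:
  fixes Pi0 sigma2 a :: real
  assumes "0 < sigma2" and g: "1 < Pi0 / sigma2" and "\<bar>a\<bar> \<le> 1"
  shows "err_exp Pi0 sigma2 a = K_zeta (Pi0 / sigma2) (zeta (Pi0 / sigma2) a) / 2"
proof (cases "\<bar>a\<bar> = 1")
  case True
  have "a\<^sup>2 = 1"
    using True power2_abs[of a] by simp
  moreover have "zeta (Pi0 / sigma2) a = 4 * (Pi0 / sigma2)"
    using g \<open>a\<^sup>2 = 1\<close> by (intro zeta_eq_4g) simp_all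
  ultimately show ?thesis
    by (simp only: err_exp_degenerate[OF assms(1)] K_zeta_4g[OF g])
next
  case False
  hence a: "\<bar>a\<bar> < 1"
    using assms(3) by simp
  have "0 \<le> Pi0"
    using assms(1) g by (simp add: less_divide_eq)
  show ?thesis
    unfolding err_exp_closed_form[OF \<open>0 \<le> Pi0\<close> assms(1) a] closed_form_eq_K_zeta[OF g a] ..
qed

lemma err_exp_antimono_on:
  fixes Pi0 sigma2 :: real
  assumes "0 < sigma2" and g: "1 < Pi0 / sigma2"
  shows "antimono_on {0..1} (err_exp Pi0 sigma2)"
proof (rule monotone_onI)
  let ?g = "Pi0 / sigma2"
  fix a b :: real assume ab: "a \<in> {0..1}" "b \<in> {0..1}" "a \<le> b"
  have "zeta ?g b \<le> zeta ?g a"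
    using monotone_onD[OF zeta_antimono_on ab] g by simp
  hence "K_zeta ?g (zeta ?g b) \<le> K_zeta ?g (zeta ?g a)"
    using monotone_onD[OF K_zeta_mono_on[OF g] zeta_range zeta_range] g ab by simp
  thus "err_exp Pi0 sigma2 b \<le> err_exp Pi0 sigma2 a"
    using assms ab by (simp add: err_exp_eq_K_zeta)
qed

lemma err_exp_0:
  fixes Pi0 sigma2 :: real
  assumes "0 \<le> Pi0" and "0 < sigma2"
  shows "err_exp Pi0 sigma2 0 = KLdiv (gauss 1) (gauss (1 + Pi0 / sigma2))"
proof -
  have "err_exp Pi0 sigma2 0 = KLdiv (gauss (sigma2 * 1)) (gauss (sigma2 * (1 + Pi0 / sigma2)))"
    using assms(2) by (simp add: err_exp_def spec_y_def algebra_simps)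
  also have "\<dots> = KLdiv (gauss 1) (gauss (1 + Pi0 / sigma2))"
    using assms by (intro KLdiv_gauss_scale) (simp_all add: add_pos_nonneg)
  finally show ?thesis .
qed

theorem theorem3:
  fixes Pi0 sigma2 :: real
  assumes "Pi0 > 0" and "sigma2 > 0" and "Pi0 / sigma2 > 1"
  shows "antimono_on {0..1} (err_exp Pi0 sigma2) \<and>
         (\<forall>a\<in>{0..1}. err_exp Pi0 sigma2 a \<le> err_exp Pi0 sigma2 0) \<and>
         err_exp Pi0 sigma2 0 = KLdiv (gauss 1) (gauss (1 + Pi0 / sigma2))"
proof -
  have "antimono_on {0..1} (err_exp Pi0 sigma2)"
    using assms(2,3) by (rule err_exp_antimono_on)
  moreover from this have "\<forall>a\<in>{0..1}. err_exp Pi0 sigma2 a \<le> err_exp Pi0 sigma2 0"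
    by (simp add: monotone_on_def)
  moreover have "err_exp Pi0 sigma2 0 = KLdiv (gauss 1) (gauss (1 + Pi0 / sigma2))"
    using assms(1,2) by (simp add: err_exp_0)
  ultimately show ?thesis
    by blast
qed

end
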